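(* Let $n\ge 2$, $d\ge 2$, let $\{1,\dots,n\}=\beta\,\dot\cup\,\overline{\beta}$ be a bipartition into nonempty sets with $k_1=|\beta|$, $k_2=|\overline{\beta}|$ (so $k_1+k_2=n$), and let $x$ be an integer. For every state $\rho$ on $(\mathbb{C}^d)^{\otimes n}$ that is separable with respect to the bipartition $(\beta|\overline{\beta})$, $$\mathcal{C}_x(\rho)\le (d^{k_1}-1)(d^{k_2}-1)+\sum_{j\in\{1,2\}:\,k_j\ge x}(d^{k_j}-1).$$
   Context: Consider $n$ qudits with Hilbert space $(\mathbb{C}^d)^{\otimes n}$. Let $\lambda_0=\mathbb{1}_d$ and let $\lambda_1,\dots,\lambda_{d^2-1}$ be Hermitian traceless $d\times d$ matrices normalized so that $\mathrm{Tr}[\lambda_i\lambda_j]=d\,\delta_{ij}$. For a nonempty subset $\alpha\subseteq\{1,\dots,n\}$ and a state $\rho$ with reduced state $\rho_\alpha$, define $\|\tau_\alpha(\rho)\|^2=\sum_{(i_k)_{k\in\alpha}\in\{1,\dots,d^2-1\}^{\alpha}}\big(\mathrm{Tr}[\rho_\alpha\bigotimes_{k\in\alpha}\lambda_{i_k}]\big)^2$. For a real number $x$ define $\mathcal{C}_x(\rho)=\sum_{\alpha\neq\emptyset,\ |\alpha|\ge x}\|\tau_\alpha(\rho)\|^2$. A state is separable with respect to the bipartition $(\beta|\overline{\beta})$ if it is a convex combination of pure states of the form $|\phi\rangle_\beta\otimes|\chi\rangle_{\overline{\beta}}$. *)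

theory Defs
  imports "HOL-Analysis.Analysis" "HOL-Library.FuncSet"
begin

text \<open>A computational-basis configuration on a set A of sites is an
 element of the extensional function space A -> {..<d}. Operators on the tensor product over the sites in A are
 functions on pairs of configurations.\<close>

type_synonym cfg = "nat \<Rightarrow> nat"
type_synonym op = "cfg \<Rightarrow> cfg \<Rightarrow> complex"

definition cfgs :: "nat \<Rightarrow> nat set \<Rightarrow> cfg set" where
  "cfgs d A = A \<rightarrow>\<^sub>E {..<d}"

definition merge :: "nat set \<Rightarrow> cfg \<Rightarrow> cfg \<Rightarrow> cfg" where
  "merge A s u = (\<lambda>i. if i \<in> A then s i else u i)"

text \<open>Generalized Gell-Mann type operator basis: lam i is a d x d matrix
 (entries lam i a b for a, b < d).\<close>
definition op_basis :: "nat \<Rightarrow> (nat \<Rightarrow> nat \<Rightarrow> nat \<Rightarrow> complex) \<Rightarrow> bool" where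
  "op_basis d lam \<longleftrightarrow>
     (\<forall>a<d. \<forall>b<d. lam 0 a b = (if a = b then 1 else 0)) \<and>
     (\<forall>i\<in>{1..<d^2}. (\<forall>a<d. \<forall>b<d. lam i a b = cnj (lam i b a)) \<and>
                      (\<Sum>a<d. lam i a a) = 0) \<and>
     (\<forall>i\<in>{1..<d^2}. \<forall>j\<in>{1..<d^2}.
        (\<Sum>a<d. \<Sum>b<d. lam i a b * lam j b a) = (if i = j then of_nat d else 0))"

definition is_state :: "nat \<Rightarrow> nat \<Rightarrow> op \<Rightarrow> bool" where
  "is_state d n \<rho> \<longleftrightarrow>
     (\<forall>s\<in>cfgs d {1..n}. \<forall>t\<in>cfgs d {1..n}. \<rho> s t = cnj (\<rho> t s)) \<and>
     (\<Sum>s\<in>cfgs d {1..n}. \<rho> s s) = 1 \<and>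
     (\<forall>v :: cfg \<Rightarrow> complex.
        0 \<le> Re (\<Sum>s\<in>cfgs d {1..n}. \<Sum>t\<in>cfgs d {1..n}. cnj (v s) * \<rho> s t * v t))"

definition separable :: "nat \<Rightarrow> nat \<Rightarrow> nat set \<Rightarrow> op \<Rightarrow> bool" where
  "separable d n \<beta> \<rho> \<longleftrightarrow>
     (\<exists>(m::nat) (p::nat \<Rightarrow> real) (\<phi>::nat \<Rightarrow> cfg \<Rightarrow> complex) (chi::nat \<Rightarrow> cfg \<Rightarrow> complex).
        (\<forall>i<m. p i \<ge> 0) \<and> (\<Sum>i<m. p i) = 1 \<and>
        (\<forall>i<m. (\<Sum>s\<in>cfgs d \<beta>. (cmod (\<phi> i s))^2) = 1) \<and>
        (\<forall>i<m. (\<Sum>s\<in>cfgs d ({1..n} - \<beta>). (cmod (chi i s))^2) = 1) \<and>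
        (\<forall>s\<in>cfgs d {1..n}. \<forall>t\<in>cfgs d {1..n}.
           \<rho> s t = (\<Sum>i<m. complex_of_real (p i) *
              (\<phi> i (restrict s \<beta>) * chi i (restrict s ({1..n} - \<beta>))) *
              cnj (\<phi> i (restrict t \<beta>) * chi i (restrict t ({1..n} - \<beta>))))))"

definition reduced :: "nat \<Rightarrow> nat \<Rightarrow> op \<Rightarrow> nat set \<Rightarrow> op" where
  "reduced d n \<rho> \<alpha> s t = (\<Sum>u\<in>cfgs d ({1..n} - \<alpha>). \<rho> (merge \<alpha> s u) (merge \<alpha> t u))"

definition expval :: "nat \<Rightarrow> nat \<Rightarrow> (nat \<Rightarrow> nat \<Rightarrow> nat \<Rightarrow> complex) \<Rightarrow> op \<Rightarrow> nat set \<Rightarrow> (nat \<Rightarrow> nat) \<Rightarrow> complex" where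
  "expval d n lam \<rho> \<alpha> idx =
     (\<Sum>s\<in>cfgs d \<alpha>. \<Sum>t\<in>cfgs d \<alpha>. reduced d n \<rho> \<alpha> s t * (\<Prod>k\<in>\<alpha>. lam (idx k) (t k) (s k)))"

text \<open>||\<tau>_\<alpha>(\<rho>)||^2 (the expectation values are real since the \<lambda>_i are Hermitian).\<close>
definition tau_norm_sq :: "nat \<Rightarrow> nat \<Rightarrow> (nat \<Rightarrow> nat \<Rightarrow> nat \<Rightarrow> complex) \<Rightarrow> op \<Rightarrow> nat set \<Rightarrow> real" where
  "tau_norm_sq d n lam \<rho> \<alpha> = (\<Sum>idx\<in>\<alpha> \<rightarrow>\<^sub>E {1..<d^2}. (Re (expval d n lam \<rho> \<alpha> idx))^2)"

definition C_x :: "nat \<Rightarrow> nat \<Rightarrow> (nat \<Rightarrow> nat \<Rightarrow> nat \<Rightarrow> complex) \<Rightarrow> real \<Rightarrow> op \<Rightarrow> real" where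
  "C_x d n lam x \<rho> = (\<Sum>\<alpha>\<in>{\<alpha>. \<alpha> \<subseteq> {1..n} \<and> \<alpha> \<noteq> {} \<and> real (card \<alpha>) \<ge> x}. tau_norm_sq d n lam \<rho> \<alpha>)"

end

theory Submission
  imports Defs
begin

text \<open>
  The correlation tensor components of \<rho> on a set \<alpha> of sites are the expectation values of
  the tensor products \<Lambda>_J of basis matrices whose index vector J vanishes exactly off \<alpha>
  (index 0 stands for the identity). Hence C_x(\<rho>) is the sum of the squared expectation values
  over all nonzero J whose support has at least x sites. For a separable state these values are
  convex combinations of products of expectation values in the two pure factors, and by convexity of
  the square it suffices to bound the sum for one product state. The matrices \<Lambda>_J on k sites
  are orthogonal with Hilbert-Schmidt norm d^k, so by Bessel's inequality the squared expectation
  values of a unit vector sum to at most d^k, the term J = 0 being 1. Splitting J into its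
  restrictions to the two blocks, the pairs with both halves nonzero contribute at most
  (d^k1 - 1)(d^k2 - 1), and a pair with one half zero has its support inside the other block,
  so it counts only if that block has at least x sites.
\<close>

lemma sum_orthogonal_combination_sq:
  fixes c :: "'b \<Rightarrow> complex" and e :: "'b \<Rightarrow> 'a \<Rightarrow> complex"
  assumes "finite I"
    and orth: "\<And>i j. i \<in> I \<Longrightarrow> j \<in> I \<Longrightarrow>
      (\<Sum>x\<in>X. e i x * cnj (e j x)) = (if i = j then of_real N else 0)"
  shows "(\<Sum>x\<in>X. (\<Sum>i\<in>I. c i * e i x) * cnj (\<Sum>i\<in>I. c i * e i x))
    = of_real (N * (\<Sum>i\<in>I. (cmod (c i))\<^sup>2))"
proof -
  have "(\<Sum>x\<in>X. (\<Sum>i\<in>I. c i * e i x) * cnj (\<Sum>i\<in>I. c i * e i x))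
      = (\<Sum>x\<in>X. \<Sum>i\<in>I. \<Sum>j\<in>I. c i * cnj (c j) * (e i x * cnj (e j x)))"
    by (simp add: cnj_sum sum_product mult_ac)
  also have "\<dots> = (\<Sum>i\<in>I. \<Sum>j\<in>I. \<Sum>x\<in>X. c i * cnj (c j) * (e i x * cnj (e j x)))"
    by (subst sum.swap) (rule sum.cong[OF refl], rule sum.swap)
  also have "\<dots> = (\<Sum>i\<in>I. \<Sum>j\<in>I. c i * cnj (c j) * (\<Sum>x\<in>X. e i x * cnj (e j x)))"
    by (simp add: sum_distrib_left)
  also have "\<dots> = (\<Sum>i\<in>I. of_real N * (c i * cnj (c i)))"
    using \<open>finite I\<close> by (intro sum.cong refl) (simp add: orth if_distrib sum.delta cong: if_cong)
  also have "\<dots> = of_real (N * (\<Sum>i\<in>I. (cmod (c i))\<^sup>2))"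
    unfolding of_real_sum sum_distrib_left of_real_mult
    by (intro sum.cong refl) (simp add: complex_norm_square del: of_real_power)
  finally show ?thesis .
qed

lemma bessel_inequality:
  fixes f :: "'a \<Rightarrow> complex" and e :: "'b \<Rightarrow> 'a \<Rightarrow> complex"
  assumes "finite X" and "finite I" and "N > 0"
    and orth: "\<And>i j. i \<in> I \<Longrightarrow> j \<in> I \<Longrightarrow>
      (\<Sum>x\<in>X. e i x * cnj (e j x)) = (if i = j then of_real N else 0)"
  shows "(\<Sum>i\<in>I. (cmod (\<Sum>x\<in>X. f x * cnj (e i x)))\<^sup>2) \<le> N * (\<Sum>x\<in>X. (cmod (f x))\<^sup>2)"
proof -
  define c where "c i = (\<Sum>x\<in>X. f x * cnj (e i x))" for i
  define g where "g x = (\<Sum>i\<in>I. c i * e i x)" for x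
  define C where "C = (\<Sum>i\<in>I. (cmod (c i))\<^sup>2)"
  define F where "F = (\<Sum>x\<in>X. (cmod (f x))\<^sup>2)"
  have cross: "(\<Sum>x\<in>X. f x * cnj (g x)) = of_real C"
  proof -
    have "(\<Sum>x\<in>X. f x * cnj (g x)) = (\<Sum>x\<in>X. \<Sum>i\<in>I. cnj (c i) * (f x * cnj (e i x)))"
      by (simp add: g_def cnj_sum sum_distrib_left mult_ac)
    also have "\<dots> = (\<Sum>i\<in>I. cnj (c i) * c i)"
      by (subst sum.swap) (simp add: c_def sum_distrib_left)
    also have "\<dots> = of_real C"
      unfolding C_def of_real_sum
      by (intro sum.cong refl) (simp add: complex_norm_square mult.commute del: of_real_power)
    finally show ?thesis .
  qed
  have gram: "(\<Sum>x\<in>X. g x * cnj (g x)) = of_real (N * C)"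
    unfolding g_def C_def using \<open>finite I\<close> orth by (rule sum_orthogonal_combination_sq)
  \<comment> \<open>The residual N f - g is orthogonal to every e i, which makes its squared norm N^2 F - N C.\<close>
  have "of_real (\<Sum>x\<in>X. (cmod (of_real N * f x - g x))\<^sup>2)
      = (\<Sum>x\<in>X. of_real N * of_real N * (f x * cnj (f x))
          - of_real N * (f x * cnj (g x)) - of_real N * cnj (f x * cnj (g x)) + g x * cnj (g x))"
    unfolding of_real_sum
    by (intro sum.cong refl) (simp only: complex_norm_square, simp add: algebra_simps)
  also have "\<dots> = of_real (N * N * F - N * C)"
  proof -
    have "(\<Sum>x\<in>X. cnj (f x * cnj (g x))) = of_real C"
      using arg_cong[OF cross, of cnj] by (simp only: cnj_sum complex_cnj_complex_of_real)
    moreover have "(\<Sum>x\<in>X. f x * cnj (f x)) = of_real F"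
      unfolding F_def of_real_sum by (simp only: complex_norm_square)
    ultimately show ?thesis
      by (simp only: sum.distrib sum_subtractf sum_distrib_left[symmetric] cross gram)
        (simp add: algebra_simps)
  qed
  finally have "(\<Sum>x\<in>X. (cmod (of_real N * f x - g x))\<^sup>2) = N * N * F - N * C"
    by (simp only: of_real_eq_iff)
  moreover have "0 \<le> (\<Sum>x\<in>X. (cmod (of_real N * f x - g x))\<^sup>2)"
    by (intro sum_nonneg) simp
  ultimately have "N * C \<le> N * (N * F)" by (simp add: algebra_simps)
  with \<open>N > 0\<close> show ?thesis by (simp add: C_def F_def c_def)
qed

(* The counting step: u and v are the all-identity indices, at which the weights a and b are 1. *)
lemma sum_pairs_off_base_le:
  fixes a :: "'a \<Rightarrow> real" and b :: "'b \<Rightarrow> real"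
  assumes fin: "finite X" "finite Y" and z: "u \<in> X" "v \<in> Y"
    and nonneg: "\<And>x. x \<in> X \<Longrightarrow> 0 \<le> a x" "\<And>y. y \<in> Y \<Longrightarrow> 0 \<le> b y"
    and base: "a u = 1" "b v = 1" and bound: "sum a X \<le> MX" "sum b Y \<le> MY"
    and Q: "Q \<subseteq> X \<times> Y" "(u, v) \<notin> Q"
    and first_only: "\<And>x. (x, v) \<in> Q \<Longrightarrow> cX" and second_only: "\<And>y. (u, y) \<in> Q \<Longrightarrow> cY"
  shows "(\<Sum>(x, y)\<in>Q. a x * b y)
    \<le> (MX - 1) * (MY - 1) + (if cX then MX - 1 else 0) + (if cY then MY - 1 else 0)"
proof -
  define SX where "SX = sum a (X - {u})"
  define SY where "SY = sum b (Y - {v})"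
  define T1 where "T1 = (X - {u}) \<times> (Y - {v})"
  define T2 where "T2 = (if cX then (X - {u}) \<times> {v} else {})"
  define T3 where "T3 = (if cY then {u} \<times> (Y - {v}) else {})"
  have SX: "0 \<le> SX" "SX \<le> MX - 1"
    using nonneg(1) bound(1) sum.remove[OF fin(1) z(1), of a] base(1)
    by (auto simp: SX_def intro: sum_nonneg)
  have SY: "0 \<le> SY" "SY \<le> MY - 1"
    using nonneg(2) bound(2) sum.remove[OF fin(2) z(2), of b] base(2)
    by (auto simp: SY_def intro: sum_nonneg)
  have cover: "Q \<subseteq> T1 \<union> T2 \<union> T3"
    using Q first_only second_only by (fastforce simp: T1_def T2_def T3_def)
  have finT: "finite T1" "finite T2" "finite T3"
    using fin by (simp_all add: T1_def T2_def T3_def)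
  have "(\<Sum>(x, y)\<in>Q. a x * b y) \<le> (\<Sum>(x, y)\<in>T1 \<union> T2 \<union> T3. a x * b y)"
    using finT cover Q(1) nonneg z
    by (intro sum_mono2) (auto simp: T1_def T2_def T3_def split: if_splits)
  also have "\<dots> = (\<Sum>(x, y)\<in>T1. a x * b y) + (\<Sum>(x, y)\<in>T2. a x * b y) + (\<Sum>(x, y)\<in>T3. a x * b y)"
    using finT by (subst sum.union_disjoint, auto simp: T1_def T2_def T3_def)+
  also have "\<dots> = SX * SY + (if cX then SX else 0) + (if cY then SY else 0)"
  proof -
    have "(\<Sum>(x, y)\<in>(X - {u}) \<times> {v}. a x * b y) = SX"
      "(\<Sum>(x, y)\<in>{u} \<times> (Y - {v}). a x * b y) = SY"
      by (simp_all add: SX_def SY_def base sum.cartesian_product[symmetric])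
    then show ?thesis
      by (simp add: T1_def T2_def T3_def SX_def SY_def sum_product sum.cartesian_product)
  qed
  also have "\<dots> \<le> (MX - 1) * (MY - 1) + (if cX then MX - 1 else 0) + (if cY then MY - 1 else 0)"
    using SX SY by (intro add_mono mult_mono) auto
  finally show ?thesis .
qed

lemma finite_cfgs [simp]: "finite A \<Longrightarrow> finite (cfgs d A)"
  by (simp add: cfgs_def finite_PiE)

lemma cfgs_less: "s \<in> cfgs d A \<Longrightarrow> k \<in> A \<Longrightarrow> s k < d"
  by (auto simp: cfgs_def)

lemma cfgs_eqI: "s \<in> cfgs d A \<Longrightarrow> t \<in> cfgs d A \<Longrightarrow> (\<And>k. k \<in> A \<Longrightarrow> s k = t k) \<Longrightarrow> s = t"
  unfolding cfgs_def by (rule PiE_ext)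

lemma restrict_merge_left: "s \<in> cfgs d A \<Longrightarrow> restrict (merge A s u) A = s"
  by (auto simp: merge_def cfgs_def PiE_def extensional_def fun_eq_iff)

lemma restrict_merge_right: "A \<inter> C = {} \<Longrightarrow> u \<in> cfgs d C \<Longrightarrow> restrict (merge A s u) C = u"
  by (auto simp: merge_def cfgs_def PiE_def extensional_def fun_eq_iff)

lemma bij_betw_merge_cfgs:
  assumes "A \<inter> C = {}"
  shows "bij_betw (\<lambda>(s, u). merge A s u) (cfgs d A \<times> cfgs d C) (cfgs d (A \<union> C))"
proof (rule bij_betw_byWitness[where f' = "\<lambda>S. (restrict S A, restrict S C)"])
  show "\<forall>q\<in>cfgs d A \<times> cfgs d C.
      (\<lambda>S. (restrict S A, restrict S C)) ((\<lambda>(s, u). merge A s u) q) = q"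
    using assms by (auto simp: restrict_merge_left restrict_merge_right)
  show "\<forall>S\<in>cfgs d (A \<union> C). (\<lambda>(s, u). merge A s u) ((\<lambda>S. (restrict S A, restrict S C)) S) = S"
    using assms by (auto simp: merge_def cfgs_def PiE_def extensional_def fun_eq_iff)
  show "(\<lambda>(s, u). merge A s u) ` (cfgs d A \<times> cfgs d C) \<subseteq> cfgs d (A \<union> C)"
    by (auto simp: cfgs_def merge_def PiE_def Pi_def extensional_def)
  show "(\<lambda>S. (restrict S A, restrict S C)) ` cfgs d (A \<union> C) \<subseteq> cfgs d A \<times> cfgs d C"
    by (auto simp: cfgs_def)
qed

lemma sum_cfgs_union:
  assumes "A \<inter> C = {}"
  shows "(\<Sum>S\<in>cfgs d (A \<union> C). g S) = (\<Sum>s\<in>cfgs d A. \<Sum>u\<in>cfgs d C. g (merge A s u))"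
  by (simp add: sum.reindex_bij_betw[OF bij_betw_merge_cfgs[OF assms], symmetric]
      sum.cartesian_product case_prod_unfold)

lemma sum_subset_cfgs_union:
  assumes dj: "A \<inter> C = {}" and G: "G \<subseteq> cfgs d (A \<union> C)"
  shows "(\<Sum>S\<in>G. g S)
    = (\<Sum>(s, u)\<in>{(s, u) \<in> cfgs d A \<times> cfgs d C. merge A s u \<in> G}. g (merge A s u))"
proof -
  let ?Q = "{(s, u) \<in> cfgs d A \<times> cfgs d C. merge A s u \<in> G}"
  have "bij_betw (\<lambda>(s, u). merge A s u) ?Q G"
  proof (rule bij_betw_subset[OF bij_betw_merge_cfgs[OF dj]])
    show "(\<lambda>(s, u). merge A s u) ` ?Q = G"
    proof
      show "G \<subseteq> (\<lambda>(s, u). merge A s u) ` ?Q"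
      proof
        fix S assume S: "S \<in> G"
        then have "S \<in> (\<lambda>(s, u). merge A s u) ` (cfgs d A \<times> cfgs d C)"
          using G bij_betw_imp_surj_on[OF bij_betw_merge_cfgs[OF dj, of d]] by blast
        then obtain s u where "(s, u) \<in> cfgs d A \<times> cfgs d C" "S = merge A s u"
          by auto
        with S show "S \<in> (\<lambda>(s, u). merge A s u) ` ?Q"
          by (intro image_eqI[of _ _ "(s, u)"]) auto
      qed
    qed auto
  qed auto
  then show ?thesis
    by (simp add: sum.reindex_bij_betw[symmetric] case_prod_unfold)
qed

lemma op_basis_identity:
  "op_basis d lam \<Longrightarrow> a < d \<Longrightarrow> b < d \<Longrightarrow> lam 0 a b = (if a = b then 1 else 0)"
  unfolding op_basis_def by blast

lemma op_basis_nonidentity: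
  assumes "op_basis d lam" and "0 < i" and "i < d^2"
  shows "(\<forall>a<d. \<forall>b<d. lam i a b = cnj (lam i b a)) \<and> (\<Sum>a<d. lam i a a) = 0"
proof -
  have "\<forall>i\<in>{1..<d^2}. (\<forall>a<d. \<forall>b<d. lam i a b = cnj (lam i b a)) \<and> (\<Sum>a<d. lam i a a) = 0"
    using assms(1) unfolding op_basis_def by (elim conjE)
  moreover have "i \<in> {1..<d^2}" using assms(2,3) by simp
  ultimately show ?thesis by blast
qed

lemma op_basis_hermitian:
  assumes "op_basis d lam" "i < d^2" "a < d" "b < d"
  shows "lam i a b = cnj (lam i b a)"
proof (cases "i = 0")
  case True
  then show ?thesis using op_basis_identity[OF assms(1)] assms(3,4) by simp
next
  case False
  then show ?thesis using op_basis_nonidentity[OF assms(1) _ assms(2)] assms(3,4) by blast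
qed

lemma op_basis_trace:
  assumes "op_basis d lam" "i < d^2"
  shows "(\<Sum>a<d. lam i a a) = (if i = 0 then of_nat d else 0)"
proof (cases "i = 0")
  case True
  then show ?thesis using op_basis_identity[OF assms(1)] by simp
next
  case False
  then have "(\<Sum>a<d. lam i a a) = 0"
    using op_basis_nonidentity[OF assms(1) _ assms(2)] by blast
  with False show ?thesis by simp
qed

lemma op_basis_orthogonal:
  assumes ob: "op_basis d lam" and i: "i < d^2" and j: "j < d^2"
  shows "(\<Sum>a<d. \<Sum>b<d. lam i a b * lam j b a) = (if i = j then of_nat d else 0)"
proof -
  have left: "(\<Sum>a<d. \<Sum>b<d. lam 0 a b * lam k b a) = (\<Sum>a<d. lam k a a)" for k
  proof (rule sum.cong[OF refl])
    fix a assume a: "a \<in> {..<d}"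
    have "(\<Sum>b<d. lam 0 a b * lam k b a) = (\<Sum>b<d. if a = b then lam k b a else 0)"
      using a by (intro sum.cong refl) (simp add: op_basis_identity[OF ob])
    then show "(\<Sum>b<d. lam 0 a b * lam k b a) = lam k a a"
      using a by simp
  qed
  have right: "(\<Sum>a<d. \<Sum>b<d. lam k a b * lam 0 b a) = (\<Sum>a<d. lam k a a)" for k
  proof -
    have "(\<Sum>a<d. \<Sum>b<d. lam k a b * lam 0 b a) = (\<Sum>b<d. \<Sum>a<d. lam 0 b a * lam k a b)"
      by (subst sum.swap) (simp only: mult.commute)
    then show ?thesis using left[of k] by simp
  qed
  show ?thesis
  proof (cases "i = 0 \<or> j = 0")
    case True
    then show ?thesis
      using left[of j] right[of i] op_basis_trace[OF ob i] op_basis_trace[OF ob j] by auto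
  next
    case False
    then have "i \<in> {1..<d^2}" "j \<in> {1..<d^2}" using i j by auto
    moreover have "\<forall>i\<in>{1..<d^2}. \<forall>j\<in>{1..<d^2}.
        (\<Sum>a<d. \<Sum>b<d. lam i a b * lam j b a) = (if i = j then of_nat d else 0)"
      using ob unfolding op_basis_def by (elim conjE)
    ultimately show ?thesis by blast
  qed
qed

text \<open>
  In the notation of the paper, basis_tensor lam B J is the matrix
  \<Lambda>_J = \<Otimes>_{k \<in> B} \<lambda>_{J k}, pure_expval d lam B v J is \<langle>v|\<Lambda>_J|v\<rangle> and
  full_expval d lam B \<rho> J is Tr(\<rho> \<Lambda>_J).
\<close>

definition basis_tensor ::
    "(nat \<Rightarrow> nat \<Rightarrow> nat \<Rightarrow> complex) \<Rightarrow> nat set \<Rightarrow> (nat \<Rightarrow> nat) \<Rightarrow> cfg \<Rightarrow> cfg \<Rightarrow> complex"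
  where "basis_tensor lam B J s t = (\<Prod>k\<in>B. lam (J k) (s k) (t k))"

definition pure_expval :: "nat \<Rightarrow> (nat \<Rightarrow> nat \<Rightarrow> nat \<Rightarrow> complex) \<Rightarrow> nat set \<Rightarrow>
    (cfg \<Rightarrow> complex) \<Rightarrow> (nat \<Rightarrow> nat) \<Rightarrow> complex"
  where "pure_expval d lam B v J =
    (\<Sum>s\<in>cfgs d B. \<Sum>t\<in>cfgs d B. v s * cnj (v t) * basis_tensor lam B J t s)"

definition full_expval ::
    "nat \<Rightarrow> (nat \<Rightarrow> nat \<Rightarrow> nat \<Rightarrow> complex) \<Rightarrow> nat set \<Rightarrow> op \<Rightarrow> (nat \<Rightarrow> nat) \<Rightarrow> complex"
  where "full_expval d lam B \<rho> J = (\<Sum>S\<in>cfgs d B. \<Sum>T\<in>cfgs d B. \<rho> S T * basis_tensor lam B J T S)"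

lemma sum_cfgs_prod:
  fixes f :: "nat \<Rightarrow> nat \<Rightarrow> 'a::comm_semiring_1"
  assumes "finite B"
  shows "(\<Sum>s\<in>cfgs d B. \<Prod>k\<in>B. f k (s k)) = (\<Prod>k\<in>B. \<Sum>a<d. f k a)"
  unfolding cfgs_def by (rule sym, rule prod_sum_PiE[OF assms]) simp

lemma basis_tensor_cong: "(\<And>k. k \<in> B \<Longrightarrow> J k = J' k) \<Longrightarrow> basis_tensor lam B J = basis_tensor lam B J'"
  unfolding basis_tensor_def by (intro ext prod.cong) auto

lemma basis_tensor_union:
  "finite A \<Longrightarrow> finite C \<Longrightarrow> A \<inter> C = {} \<Longrightarrow>
    basis_tensor lam (A \<union> C) J s t = basis_tensor lam A J s t * basis_tensor lam C J s t"
  by (simp add: basis_tensor_def prod.union_disjoint)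

lemma basis_tensor_merge_left:
  "basis_tensor lam A J (merge A s u) (merge A t w) = basis_tensor lam A J s t"
  unfolding basis_tensor_def by (rule prod.cong) (auto simp: merge_def)

lemma basis_tensor_merge_right:
  "A \<inter> C = {} \<Longrightarrow> basis_tensor lam C J (merge A s u) (merge A t w) = basis_tensor lam C J u w"
  unfolding basis_tensor_def by (rule prod.cong) (auto simp: merge_def)

(* Used as a rewrite rule this equation loops, so it is only ever instantiated. *)
lemma basis_tensor_hermitian:
  assumes "op_basis d lam" "J \<in> cfgs (d^2) B" "s \<in> cfgs d B" "t \<in> cfgs d B"
  shows "basis_tensor lam B J t s = cnj (basis_tensor lam B J s t)"
  unfolding basis_tensor_def cnj_prod
  by (rule prod.cong[OF refl], rule op_basis_hermitian[OF assms(1)]) (use assms cfgs_less in blast)+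

lemma basis_tensor_identity:
  assumes "op_basis d lam" "finite B" "\<And>k. k \<in> B \<Longrightarrow> J k = 0" "s \<in> cfgs d B" "t \<in> cfgs d B"
  shows "basis_tensor lam B J s t = (if s = t then 1 else 0)"
proof -
  have "basis_tensor lam B J s t = (\<Prod>k\<in>B. if s k = t k then 1 else 0)"
    unfolding basis_tensor_def
    using assms op_basis_identity[OF assms(1)] cfgs_less by (intro prod.cong) auto
  also have "\<dots> = (if s = t then 1 else 0)"
    using assms(2) cfgs_eqI[OF assms(4,5)] by (auto simp: prod_zero_iff)
  finally show ?thesis .
qed

lemma basis_tensor_orthogonal:
  assumes "op_basis d lam" "finite B" "J \<in> cfgs (d^2) B" "J' \<in> cfgs (d^2) B"
  shows "(\<Sum>s\<in>cfgs d B. \<Sum>t\<in>cfgs d B. basis_tensor lam B J s t * basis_tensor lam B J' t s)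
     = (if J = J' then of_nat d ^ card B else 0)"
proof -
  have "(\<Sum>s\<in>cfgs d B. \<Sum>t\<in>cfgs d B. basis_tensor lam B J s t * basis_tensor lam B J' t s)
      = (\<Sum>s\<in>cfgs d B. \<Sum>t\<in>cfgs d B. \<Prod>k\<in>B. lam (J k) (s k) (t k) * lam (J' k) (t k) (s k))"
    by (simp add: basis_tensor_def prod.distrib)
  also have "\<dots> = (\<Sum>s\<in>cfgs d B. \<Prod>k\<in>B. \<Sum>b<d. lam (J k) (s k) b * lam (J' k) b (s k))"
    by (rule sum.cong[OF refl], rule sum_cfgs_prod[OF assms(2)])
  also have "\<dots> = (\<Prod>k\<in>B. \<Sum>a<d. \<Sum>b<d. lam (J k) a b * lam (J' k) b a)"
    by (rule sum_cfgs_prod[OF assms(2), where f = "\<lambda>k a. \<Sum>b<d. lam (J k) a b * lam (J' k) b a"])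
  also have "\<dots> = (\<Prod>k\<in>B. if J k = J' k then of_nat d else 0)"
    using assms cfgs_less by (intro prod.cong refl op_basis_orthogonal) blast+
  also have "\<dots> = (if J = J' then of_nat d ^ card B else 0)"
    using assms(2) cfgs_eqI[OF assms(3,4)] by (auto simp: prod_zero_iff)
  finally show ?thesis .
qed

lemma pure_expval_cong:
  "(\<And>k. k \<in> B \<Longrightarrow> J k = J' k) \<Longrightarrow> pure_expval d lam B v J = pure_expval d lam B v J'"
  unfolding pure_expval_def by (simp add: basis_tensor_cong[of B J J'])

lemma pure_expval_identity:
  assumes "op_basis d lam" "finite B" "\<And>k. k \<in> B \<Longrightarrow> J k = 0"
  shows "pure_expval d lam B v J = of_real (\<Sum>s\<in>cfgs d B. (cmod (v s))\<^sup>2)"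
proof -
  have "pure_expval d lam B v J = (\<Sum>s\<in>cfgs d B. \<Sum>t\<in>cfgs d B. if t = s then v s * cnj (v t) else 0)"
    unfolding pure_expval_def by (intro sum.cong refl) (simp add: basis_tensor_identity[OF assms])
  also have "\<dots> = (\<Sum>s\<in>cfgs d B. v s * cnj (v s))"
    using assms(2) by (intro sum.cong refl) simp
  finally show ?thesis
    unfolding of_real_sum by (simp only: complex_norm_square)
qed

lemma pure_expval_product:
  assumes "finite A" "finite C" "A \<inter> C = {}"
  shows "pure_expval d lam (A \<union> C) (\<lambda>S. \<phi> (restrict S A) * \<psi> (restrict S C)) J
       = pure_expval d lam A \<phi> J * pure_expval d lam C \<psi> J"
proof -
  let ?L = "basis_tensor lam A J" and ?R = "basis_tensor lam C J"
  have "pure_expval d lam (A \<union> C) (\<lambda>S. \<phi> (restrict S A) * \<psi> (restrict S C)) J =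
     (\<Sum>s\<in>cfgs d A. \<Sum>u\<in>cfgs d C. \<Sum>t\<in>cfgs d A. \<Sum>w\<in>cfgs d C.
       (\<phi> s * cnj (\<phi> t) * ?L t s) * (\<psi> u * cnj (\<psi> w) * ?R w u))"
    unfolding pure_expval_def sum_cfgs_union[OF assms(3)]
    by (intro sum.cong refl)
      (simp add: assms restrict_merge_left restrict_merge_right basis_tensor_union
        basis_tensor_merge_left basis_tensor_merge_right mult_ac)
  also have "\<dots> = (\<Sum>s\<in>cfgs d A. \<Sum>t\<in>cfgs d A. \<Sum>u\<in>cfgs d C. \<Sum>w\<in>cfgs d C.
       (\<phi> s * cnj (\<phi> t) * ?L t s) * (\<psi> u * cnj (\<psi> w) * ?R w u))"
    by (rule sum.cong[OF refl], rule sum.swap)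
  also have "\<dots> = pure_expval d lam A \<phi> J * pure_expval d lam C \<psi> J"
    unfolding pure_expval_def by (simp only: sum_distrib_right) (simp only: sum_distrib_left)
  finally show ?thesis .
qed

lemma sum_pure_expval_sq_le:
  assumes "op_basis d lam" "finite B" "d > 0"
  shows "(\<Sum>J\<in>cfgs (d^2) B. (cmod (pure_expval d lam B v J))\<^sup>2)
    \<le> real d ^ card B * (\<Sum>s\<in>cfgs d B. (cmod (v s))\<^sup>2)\<^sup>2"
proof -
  let ?X = "cfgs d B \<times> cfgs d B"
  define e where "e J = (\<lambda>(s, t). basis_tensor lam B J s t)" for J
  define P where "P = (\<lambda>(s, t). v s * cnj (v t))"
  have cnj_e: "cnj (e J x) = (case x of (s, t) \<Rightarrow> basis_tensor lam B J t s)"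
    if J: "J \<in> cfgs (d^2) B" and x: "x \<in> ?X" for J x
  proof -
    obtain s t where "x = (s, t)" "s \<in> cfgs d B" "t \<in> cfgs d B" using x by blast
    then show ?thesis using basis_tensor_hermitian[OF assms(1) J, of s t] by (simp add: e_def)
  qed
  have "pure_expval d lam B v J = (\<Sum>x\<in>?X. P x * cnj (e J x))" if "J \<in> cfgs (d^2) B" for J
    unfolding pure_expval_def sum.cartesian_product
    by (intro sum.cong refl) (auto simp: P_def cnj_e[OF that])
  then have "(\<Sum>J\<in>cfgs (d^2) B. (cmod (pure_expval d lam B v J))\<^sup>2)
      = (\<Sum>J\<in>cfgs (d^2) B. (cmod (\<Sum>x\<in>?X. P x * cnj (e J x)))\<^sup>2)"
    by simp
  also have "\<dots> \<le> real d ^ card B * (\<Sum>x\<in>?X. (cmod (P x))\<^sup>2)"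
  proof (rule bessel_inequality)
    fix J J' assume J: "J \<in> cfgs (d^2) B" and J': "J' \<in> cfgs (d^2) B"
    have "(\<Sum>x\<in>?X. e J x * cnj (e J' x))
        = (\<Sum>s\<in>cfgs d B. \<Sum>t\<in>cfgs d B. basis_tensor lam B J s t * basis_tensor lam B J' t s)"
      unfolding sum.cartesian_product
      by (intro sum.cong refl) (simp only: cnj_e[OF J'], simp add: e_def split: prod.split)
    then show "(\<Sum>x\<in>?X. e J x * cnj (e J' x)) = (if J = J' then of_real (real d ^ card B) else 0)"
      using basis_tensor_orthogonal[OF assms(1,2) J J'] by simp
  qed (use assms in auto)
  also have "(\<Sum>x\<in>?X. (cmod (P x))\<^sup>2)
      = (\<Sum>s\<in>cfgs d B. \<Sum>t\<in>cfgs d B. (cmod (v s))\<^sup>2 * (cmod (v t))\<^sup>2)"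
    unfolding sum.cartesian_product
    by (intro sum.cong refl) (auto simp: P_def norm_mult power_mult_distrib)
  also have "\<dots> = (\<Sum>s\<in>cfgs d B. (cmod (v s))\<^sup>2)\<^sup>2"
    by (simp only: power2_eq_square[of "sum _ _"] sum_product)
  finally show ?thesis .
qed

lemma full_expval_cong:
  "(\<And>k. k \<in> B \<Longrightarrow> J k = J' k) \<Longrightarrow> full_expval d lam B \<rho> J = full_expval d lam B \<rho> J'"
  unfolding full_expval_def by (simp add: basis_tensor_cong[of B J J'])

lemma full_expval_mixture:
  assumes "\<And>S T. S \<in> cfgs d B \<Longrightarrow> T \<in> cfgs d B \<Longrightarrow>
    \<rho> S T = (\<Sum>i<m. of_real (p i) * v i S * cnj (v i T))"
  shows "full_expval d lam B \<rho> J = (\<Sum>i<m. of_real (p i) * pure_expval d lam B (v i) J)"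
proof -
  have "full_expval d lam B \<rho> J = (\<Sum>S\<in>cfgs d B. \<Sum>T\<in>cfgs d B. \<Sum>i<m.
      of_real (p i) * (v i S * cnj (v i T) * basis_tensor lam B J T S))"
    unfolding full_expval_def using assms
    by (intro sum.cong refl) (simp add: sum_distrib_right mult.assoc)
  also have "\<dots> = (\<Sum>i<m. \<Sum>S\<in>cfgs d B. \<Sum>T\<in>cfgs d B.
      of_real (p i) * (v i S * cnj (v i T) * basis_tensor lam B J T S))"
    by (subst sum.swap) (rule sum.cong[OF refl], rule sum.swap)
  also have "\<dots> = (\<Sum>i<m. of_real (p i) * pure_expval d lam B (v i) J)"
    unfolding pure_expval_def by (simp only: sum_distrib_left)
  finally show ?thesis .
qed

lemma expval_eq_full_expval:
  assumes ob: "op_basis d lam" and "\<alpha> \<subseteq> {1..n}"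
  shows "expval d n lam \<rho> \<alpha> idx = full_expval d lam {1..n} \<rho> (\<lambda>k. if k \<in> \<alpha> then idx k else 0)"
proof -
  define C where "C = {1..n} - \<alpha>"
  define J where "J = (\<lambda>k. if k \<in> \<alpha> then idx k else (0::nat))"
  have un: "{1..n} = \<alpha> \<union> C" and dj: "\<alpha> \<inter> C = {}" using assms(2) by (auto simp: C_def)
  have fin: "finite \<alpha>" "finite C" using assms(2) finite_subset by (auto simp: C_def)
  have J: "basis_tensor lam (\<alpha> \<union> C) J (merge \<alpha> t w) (merge \<alpha> s u) =
      (\<Prod>k\<in>\<alpha>. lam (idx k) (t k) (s k)) * (if w = u then 1 else 0)"
    if "w \<in> cfgs d C" "u \<in> cfgs d C" for t w s u
  proof -
    have "basis_tensor lam C J w u = (if w = u then 1 else 0)"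
      by (rule basis_tensor_identity[OF ob fin(2) _ that]) (use dj in \<open>auto simp: J_def\<close>)
    moreover have "basis_tensor lam \<alpha> J t s = (\<Prod>k\<in>\<alpha>. lam (idx k) (t k) (s k))"
      unfolding basis_tensor_def J_def by (rule prod.cong) auto
    ultimately show ?thesis
      by (simp add: basis_tensor_union[OF fin dj] basis_tensor_merge_left
          basis_tensor_merge_right[OF dj])
  qed
  have "full_expval d lam {1..n} \<rho> J =
     (\<Sum>s\<in>cfgs d \<alpha>. \<Sum>u\<in>cfgs d C. \<Sum>t\<in>cfgs d \<alpha>. \<Sum>w\<in>cfgs d C.
        \<rho> (merge \<alpha> s u) (merge \<alpha> t w) * basis_tensor lam (\<alpha> \<union> C) J (merge \<alpha> t w) (merge \<alpha> s u))"
    unfolding full_expval_def un sum_cfgs_union[OF dj] ..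
  also have "\<dots> = (\<Sum>s\<in>cfgs d \<alpha>. \<Sum>u\<in>cfgs d C. \<Sum>t\<in>cfgs d \<alpha>.
        \<rho> (merge \<alpha> s u) (merge \<alpha> t u) * (\<Prod>k\<in>\<alpha>. lam (idx k) (t k) (s k)))"
    using fin
    by (intro sum.cong refl) (simp add: J if_distrib[of "\<lambda>c. _ * c"] sum.delta cong: if_cong)
  also have "\<dots> = (\<Sum>s\<in>cfgs d \<alpha>. \<Sum>t\<in>cfgs d \<alpha>. \<Sum>u\<in>cfgs d C.
        \<rho> (merge \<alpha> s u) (merge \<alpha> t u) * (\<Prod>k\<in>\<alpha>. lam (idx k) (t k) (s k)))"
    by (rule sum.cong[OF refl], rule sum.swap)
  also have "\<dots> = expval d n lam \<rho> \<alpha> idx"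
    unfolding expval_def reduced_def C_def[symmetric]
    by (intro sum.cong refl) (simp add: sum_distrib_right)
  finally show ?thesis by (simp add: J_def)
qed

definition index_support :: "nat set \<Rightarrow> (nat \<Rightarrow> nat) \<Rightarrow> nat set"
  where "index_support B J = {k \<in> B. J k \<noteq> 0}"

definition correlation_indices :: "nat \<Rightarrow> nat set \<Rightarrow> real \<Rightarrow> (nat \<Rightarrow> nat) set"
  where "correlation_indices d B r =
    {J \<in> cfgs (d^2) B. index_support B J \<noteq> {} \<and> r \<le> real (card (index_support B J))}"

lemma bij_betw_extend_by_zero:
  assumes "0 < D"
  shows "bij_betw (\<lambda>(\<alpha>, idx) k. if k \<in> \<alpha> then idx k else if k \<in> N then 0 else undefined)
    (SIGMA \<alpha>:{\<alpha>. \<alpha> \<subseteq> N \<and> P \<alpha>}. \<alpha> \<rightarrow>\<^sub>E {1..<D}) {J \<in> cfgs D N. P (index_support N J)}"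
proof (rule bij_betw_byWitness[where
      f' = "\<lambda>J. (index_support N J, restrict J (index_support N J))"])
  have support: "index_support N (\<lambda>k. if k \<in> \<alpha> then idx k else if k \<in> N then 0 else undefined) = \<alpha>"
    if "\<alpha> \<subseteq> N" "idx \<in> \<alpha> \<rightarrow>\<^sub>E {1..<D}" for \<alpha> idx
    using that by (fastforce simp: index_support_def PiE_def Pi_def)
  show "\<forall>q\<in>SIGMA \<alpha>:{\<alpha>. \<alpha> \<subseteq> N \<and> P \<alpha>}. \<alpha> \<rightarrow>\<^sub>E {1..<D}.
      (\<lambda>J. (index_support N J, restrict J (index_support N J)))
        ((\<lambda>(\<alpha>, idx) k. if k \<in> \<alpha> then idx k else if k \<in> N then 0 else undefined) q) = q"
    by (auto simp: support PiE_def extensional_def fun_eq_iff)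
  show "\<forall>J\<in>{J \<in> cfgs D N. P (index_support N J)}.
      (\<lambda>(\<alpha>, idx) k. if k \<in> \<alpha> then idx k else if k \<in> N then 0 else undefined)
        ((\<lambda>J. (index_support N J, restrict J (index_support N J))) J) = J"
    by (auto simp: index_support_def cfgs_def PiE_def extensional_def fun_eq_iff)
  show "(\<lambda>(\<alpha>, idx) k. if k \<in> \<alpha> then idx k else if k \<in> N then 0 else undefined) `
      (SIGMA \<alpha>:{\<alpha>. \<alpha> \<subseteq> N \<and> P \<alpha>}. \<alpha> \<rightarrow>\<^sub>E {1..<D}) \<subseteq> {J \<in> cfgs D N. P (index_support N J)}"
    using assms by (auto simp: support cfgs_def PiE_def Pi_def extensional_def)
  show "(\<lambda>J. (index_support N J, restrict J (index_support N J))) `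
      {J \<in> cfgs D N. P (index_support N J)} \<subseteq> (SIGMA \<alpha>:{\<alpha>. \<alpha> \<subseteq> N \<and> P \<alpha>}. \<alpha> \<rightarrow>\<^sub>E {1..<D})"
    by (auto simp: index_support_def cfgs_def PiE_def Pi_def)
qed

lemma C_x_eq_sum_full_expval:
  assumes ob: "op_basis d lam" and "0 < d"
  shows "C_x d n lam r \<rho> =
    (\<Sum>J\<in>correlation_indices d {1..n} r. (Re (full_expval d lam {1..n} \<rho> J))\<^sup>2)"
proof -
  let ?N = "{1..n}"
  let ?AS = "{\<alpha>. \<alpha> \<subseteq> ?N \<and> (\<alpha> \<noteq> {} \<and> r \<le> real (card \<alpha>))}"
  define ext
    where "ext = (\<lambda>(\<alpha>, idx) k. if k \<in> \<alpha> then idx k else if k \<in> ?N then 0 else (undefined::nat))"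
  define G where "G J = (Re (full_expval d lam ?N \<rho> J))\<^sup>2" for J
  have fin: "finite ?AS" by (rule finite_subset[of _ "Pow ?N"]) auto
  have finPi: "\<forall>\<alpha>\<in>?AS. finite (\<alpha> \<rightarrow>\<^sub>E {1..<d^2})"
    by (auto intro!: finite_PiE dest: finite_subset)
  have "C_x d n lam r \<rho> = (\<Sum>\<alpha>\<in>?AS. \<Sum>idx\<in>\<alpha> \<rightarrow>\<^sub>E {1..<d^2}. (Re (expval d n lam \<rho> \<alpha> idx))\<^sup>2)"
    unfolding C_x_def tau_norm_sq_def by (simp add: conj_commute)
  also have "\<dots> = (\<Sum>\<alpha>\<in>?AS. \<Sum>idx\<in>\<alpha> \<rightarrow>\<^sub>E {1..<d^2}. G (ext (\<alpha>, idx)))"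
  proof (intro sum.cong refl)
    fix \<alpha> idx assume "\<alpha> \<in> ?AS"
    then have "expval d n lam \<rho> \<alpha> idx = full_expval d lam ?N \<rho> (\<lambda>k. if k \<in> \<alpha> then idx k else 0)"
      by (intro expval_eq_full_expval[OF ob]) simp
    also have "\<dots> = full_expval d lam ?N \<rho> (ext (\<alpha>, idx))"
      by (rule full_expval_cong) (simp add: ext_def)
    finally show "(Re (expval d n lam \<rho> \<alpha> idx))\<^sup>2 = G (ext (\<alpha>, idx))" by (simp add: G_def)
  qed
  also have "\<dots> = (\<Sum>q\<in>(SIGMA \<alpha>:?AS. \<alpha> \<rightarrow>\<^sub>E {1..<d^2}). G (ext q))"
    unfolding sum.Sigma[OF fin finPi] by (rule sum.cong) auto
  also have "\<dots> = sum G (correlation_indices d ?N r)"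
    unfolding correlation_indices_def ext_def
    by (rule sum.reindex_bij_betw, rule bij_betw_extend_by_zero) (use assms in simp)
  finally show ?thesis by (simp add: G_def)
qed

lemma correlation_indices_card_le:
  assumes "J \<in> correlation_indices d B r" and "index_support B J \<subseteq> A" and "finite A"
  shows "r \<le> real (card A)"
proof -
  have "card (index_support B J) \<le> card A" using card_mono[OF assms(3,2)] .
  with assms(1) show ?thesis by (simp add: correlation_indices_def)
qed

lemma sum_correlations_product_state_le:
  assumes ob: "op_basis d lam" and "0 < d" and fin: "finite A" "finite C" and dj: "A \<inter> C = {}"
    and norm: "(\<Sum>s\<in>cfgs d A. (cmod (\<phi> s))\<^sup>2) = 1" "(\<Sum>s\<in>cfgs d C. (cmod (\<psi> s))\<^sup>2) = 1"
  shows "(\<Sum>J\<in>correlation_indices d (A \<union> C) r.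
      (cmod (pure_expval d lam A \<phi> J))\<^sup>2 * (cmod (pure_expval d lam C \<psi> J))\<^sup>2)
    \<le> (real d ^ card A - 1) * (real d ^ card C - 1)
      + (if r \<le> real (card A) then real d ^ card A - 1 else 0)
      + (if r \<le> real (card C) then real d ^ card C - 1 else 0)"
proof -
  define a where "a J = (cmod (pure_expval d lam A \<phi> J))\<^sup>2" for J
  define b where "b J = (cmod (pure_expval d lam C \<psi> J))\<^sup>2" for J
  define z1 where "z1 = restrict (\<lambda>_. 0::nat) A"
  define z2 where "z2 = restrict (\<lambda>_. 0::nat) C"
  define Good where "Good = correlation_indices d (A \<union> C) r"
  define Q where "Q = {(J1, J2) \<in> cfgs (d^2) A \<times> cfgs (d^2) C. merge A J1 J2 \<in> Good}"
  have support: "index_support (A \<union> C) (merge A J1 J2) = index_support A J1 \<union> index_support C J2"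
    for J1 J2 using dj by (auto simp: index_support_def merge_def)
  have no_support: "index_support A z1 = {}" "index_support C z2 = {}"
    by (simp_all add: index_support_def z1_def z2_def)
  have "(\<Sum>J\<in>Good. a J * b J) = (\<Sum>(J1, J2)\<in>Q. a (merge A J1 J2) * b (merge A J1 J2))"
    unfolding Q_def
    by (rule sum_subset_cfgs_union[OF dj]) (auto simp: Good_def correlation_indices_def)
  also have "\<dots> = (\<Sum>(J1, J2)\<in>Q. a J1 * b J2)"
  proof (intro sum.cong refl, clarify)
    fix J1 J2
    have "pure_expval d lam A \<phi> (merge A J1 J2) = pure_expval d lam A \<phi> J1"
      "pure_expval d lam C \<psi> (merge A J1 J2) = pure_expval d lam C \<psi> J2"
      using dj by (auto intro!: pure_expval_cong simp: merge_def)
    then show "a (merge A J1 J2) * b (merge A J1 J2) = a J1 * b J2" by (simp add: a_def b_def)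
  qed
  also have "\<dots> \<le> (real d ^ card A - 1) * (real d ^ card C - 1)
      + (if r \<le> real (card A) then real d ^ card A - 1 else 0)
      + (if r \<le> real (card C) then real d ^ card C - 1 else 0)"
  proof (rule sum_pairs_off_base_le[where u = z1 and v = z2])
    show "a z1 = 1" "b z2 = 1"
      using pure_expval_identity[OF ob fin(1), of z1 \<phi>]
        pure_expval_identity[OF ob fin(2), of z2 \<psi>] norm
      by (simp_all add: a_def b_def z1_def z2_def)
    show "sum a (cfgs (d^2) A) \<le> real d ^ card A" "sum b (cfgs (d^2) C) \<le> real d ^ card C"
      using sum_pure_expval_sq_le[OF ob fin(1) \<open>0 < d\<close>, of \<phi>]
        sum_pure_expval_sq_le[OF ob fin(2) \<open>0 < d\<close>, of \<psi>] norm
      by (simp_all add: a_def b_def)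
    show "z1 \<in> cfgs (d^2) A" "z2 \<in> cfgs (d^2) C"
      using \<open>0 < d\<close> by (auto simp: z1_def z2_def cfgs_def)
    show "(z1, z2) \<notin> Q"
      by (simp add: Q_def Good_def correlation_indices_def support no_support)
    show "r \<le> real (card A)" if "(J1, z2) \<in> Q" for J1
    proof (rule correlation_indices_card_le[OF _ _ fin(1)])
      show "merge A J1 z2 \<in> correlation_indices d (A \<union> C) r" using that by (simp add: Q_def Good_def)
      show "index_support (A \<union> C) (merge A J1 z2) \<subseteq> A"
        unfolding support no_support by (auto simp: index_support_def)
    qed
    show "r \<le> real (card C)" if "(z1, J2) \<in> Q" for J2
    proof (rule correlation_indices_card_le[OF _ _ fin(2)])
      show "merge A z1 J2 \<in> correlation_indices d (A \<union> C) r" using that by (simp add: Q_def Good_def)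
      show "index_support (A \<union> C) (merge A z1 J2) \<subseteq> C"
        unfolding support no_support by (auto simp: index_support_def)
    qed
  qed (use fin in \<open>auto simp: Q_def a_def b_def\<close>)
  finally show ?thesis by (simp add: Good_def a_def b_def)
qed

lemma full_expval_separable_sq_le:
  fixes m :: nat and p :: "nat \<Rightarrow> real"
  assumes fin: "finite A" "finite C" and dj: "A \<inter> C = {}"
    and p: "\<forall>i<m. 0 \<le> p i" "(\<Sum>i<m. p i) = 1"
    and \<rho>: "\<And>S T. S \<in> cfgs d (A \<union> C) \<Longrightarrow> T \<in> cfgs d (A \<union> C) \<Longrightarrow>
      \<rho> S T = (\<Sum>i<m. of_real (p i) * (\<phi> i (restrict S A) * \<psi> i (restrict S C))
        * cnj (\<phi> i (restrict T A) * \<psi> i (restrict T C)))"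
  shows "(Re (full_expval d lam (A \<union> C) \<rho> J))\<^sup>2
    \<le> (\<Sum>i<m. p i *
          ((cmod (pure_expval d lam A (\<phi> i) J))\<^sup>2 * (cmod (pure_expval d lam C (\<psi> i) J))\<^sup>2))"
proof -
  define a where "a i = pure_expval d lam A (\<phi> i) J" for i
  define b where "b i = pure_expval d lam C (\<psi> i) J" for i
  have "full_expval d lam (A \<union> C) \<rho> J = (\<Sum>i<m. of_real (p i) *
      pure_expval d lam (A \<union> C) (\<lambda>S. \<phi> i (restrict S A) * \<psi> i (restrict S C)) J)"
    using \<rho> by (intro full_expval_mixture) simp
  also have "\<dots> = (\<Sum>i<m. of_real (p i) * (a i * b i))"
    by (simp add: a_def b_def pure_expval_product[OF fin dj])
  finally have "(Re (full_expval d lam (A \<union> C) \<rho> J))\<^sup>2 = (\<Sum>i<m. p i * Re (a i * b i))\<^sup>2"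
    by simp
  also have "\<dots> \<le> (\<Sum>i<m. p i * (Re (a i * b i))\<^sup>2)"
  proof -
    have "{..<m} \<noteq> {}" using p(2) by auto
    then show ?thesis
      using convex_on_sum[where S = "{..<m}" and a = p and y = "\<lambda>i. Re (a i * b i)",
          OF _ _ convex_power2] p
      by simp
  qed
  also have "\<dots> \<le> (\<Sum>i<m. p i * ((cmod (a i))\<^sup>2 * (cmod (b i))\<^sup>2))"
  proof (intro sum_mono mult_left_mono)
    fix i
    have "(Re (a i * b i))\<^sup>2 \<le> (cmod (a i * b i))\<^sup>2"
      unfolding abs_le_square_iff[symmetric] abs_norm_cancel by (rule abs_Re_le_cmod)
    then show "(Re (a i * b i))\<^sup>2 \<le> (cmod (a i))\<^sup>2 * (cmod (b i))\<^sup>2"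
      by (simp add: norm_mult power_mult_distrib)
  qed (use p in auto)
  finally show ?thesis by (simp add: a_def b_def)
qed

lemma sum_correlations_separable_le:
  fixes m :: nat and p :: "nat \<Rightarrow> real"
  assumes ob: "op_basis d lam" and "0 < d" and fin: "finite A" "finite C" and dj: "A \<inter> C = {}"
    and p: "\<forall>i<m. 0 \<le> p i" "(\<Sum>i<m. p i) = 1"
    and norm: "\<forall>i<m. (\<Sum>s\<in>cfgs d A. (cmod (\<phi> i s))\<^sup>2) = 1"
      "\<forall>i<m. (\<Sum>s\<in>cfgs d C. (cmod (\<psi> i s))\<^sup>2) = 1"
    and \<rho>: "\<forall>S\<in>cfgs d (A \<union> C). \<forall>T\<in>cfgs d (A \<union> C).
      \<rho> S T = (\<Sum>i<m. of_real (p i) * (\<phi> i (restrict S A) * \<psi> i (restrict S C))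
        * cnj (\<phi> i (restrict T A) * \<psi> i (restrict T C)))"
  shows "(\<Sum>J\<in>correlation_indices d (A \<union> C) r. (Re (full_expval d lam (A \<union> C) \<rho> J))\<^sup>2)
    \<le> (real d ^ card A - 1) * (real d ^ card C - 1)
      + (if r \<le> real (card A) then real d ^ card A - 1 else 0)
      + (if r \<le> real (card C) then real d ^ card C - 1 else 0)"
    (is "_ \<le> ?bound")
proof -
  let ?Good = "correlation_indices d (A \<union> C) r"
  define w where
    "w i J = (cmod (pure_expval d lam A (\<phi> i) J))\<^sup>2 * (cmod (pure_expval d lam C (\<psi> i) J))\<^sup>2"
    for i J
  have "(\<Sum>J\<in>?Good. (Re (full_expval d lam (A \<union> C) \<rho> J))\<^sup>2) \<le> (\<Sum>J\<in>?Good. \<Sum>i<m. p i * w i J)"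
    unfolding w_def using fin dj p \<rho> by (intro sum_mono full_expval_separable_sq_le) auto
  also have "\<dots> = (\<Sum>i<m. p i * (\<Sum>J\<in>?Good. w i J))"
    by (simp add: sum.swap[of _ ?Good] sum_distrib_left)
  also have "\<dots> \<le> (\<Sum>i<m. p i * ?bound)"
    unfolding w_def using p(1) norm
    by (intro sum_mono mult_left_mono sum_correlations_product_state_le[OF ob \<open>0 < d\<close> fin dj]) auto
  also have "\<dots> = ?bound" by (simp add: p(2) sum_distrib_right[symmetric])
  finally show ?thesis .
qed

theorem theorem2:
  fixes n d :: nat and \<beta> :: "nat set" and x :: int
    and lam :: "nat \<Rightarrow> nat \<Rightarrow> nat \<Rightarrow> complex" and \<rho> :: op
  assumes "n \<ge> 2" and "d \<ge> 2"
    and "op_basis d lam"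
    and "\<beta> \<subseteq> {1..n}" and "\<beta> \<noteq> {}" and "{1..n} - \<beta> \<noteq> {}"
    and "is_state d n \<rho>" and "separable d n \<beta> \<rho>"
  shows "C_x d n lam (real_of_int x) \<rho> \<le>
    (real d ^ card \<beta> - 1) * (real d ^ card ({1..n} - \<beta>) - 1)
    + (if int (card \<beta>) \<ge> x then real d ^ card \<beta> - 1 else 0)
    + (if int (card ({1..n} - \<beta>)) \<ge> x then real d ^ card ({1..n} - \<beta>) - 1 else 0)"
proof -
  define C where "C = {1..n} - \<beta>"
  have d: "0 < d" using \<open>d \<ge> 2\<close> by simp
  have le_iff: "real_of_int x \<le> real k \<longleftrightarrow> x \<le> int k" for k :: nat
    by (metis of_int_le_iff of_int_of_nat_eq)
  have split: "{1..n} = \<beta> \<union> C" "\<beta> \<inter> C = {}" and fin: "finite \<beta>" "finite C"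
    using \<open>\<beta> \<subseteq> {1..n}\<close> finite_subset by (auto simp: C_def)
  obtain m :: nat and p :: "nat \<Rightarrow> real" and \<phi> \<psi> :: "nat \<Rightarrow> cfg \<Rightarrow> complex"
    where p: "\<forall>i<m. 0 \<le> p i" "(\<Sum>i<m. p i) = 1"
      and norm: "\<forall>i<m. (\<Sum>s\<in>cfgs d \<beta>. (cmod (\<phi> i s))\<^sup>2) = 1"
        "\<forall>i<m. (\<Sum>s\<in>cfgs d C. (cmod (\<psi> i s))\<^sup>2) = 1"
      and \<rho>: "\<forall>S\<in>cfgs d {1..n}. \<forall>T\<in>cfgs d {1..n}. \<rho> S T = (\<Sum>i<m. of_real (p i) *
        (\<phi> i (restrict S \<beta>) * \<psi> i (restrict S C)) * cnj (\<phi> i (restrict T \<beta>) * \<psi> i (restrict T C)))"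
    using \<open>separable d n \<beta> \<rho>\<close> unfolding separable_def C_def[symmetric]
    by (elim exE conjE) (rule that; assumption)
  have "C_x d n lam (real_of_int x) \<rho>
      = (\<Sum>J\<in>correlation_indices d (\<beta> \<union> C) (real_of_int x). (Re (full_expval d lam (\<beta> \<union> C) \<rho> J))\<^sup>2)"
    using C_x_eq_sum_full_expval[OF \<open>op_basis d lam\<close> d] by (simp only: split(1))
  also have "\<dots> \<le> (real d ^ card \<beta> - 1) * (real d ^ card C - 1)
      + (if real_of_int x \<le> real (card \<beta>) then real d ^ card \<beta> - 1 else 0)
      + (if real_of_int x \<le> real (card C) then real d ^ card C - 1 else 0)"
    by (rule sum_correlations_separable_le[OF \<open>op_basis d lam\<close> d fin split(2) p norm
          \<rho>[unfolded split(1)]])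
  finally show ?thesis
    by (simp only: C_def le_iff)
qed

end
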